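(* Let $X$ be a locally finite poset with unique minimal element $0$ and let $f,g:X\to L$ satisfy $g(x)=\langle\bigoplus_{y\le x}f(y)\rangle^+_-$ for all $x\in X$. Then for every $x\in X$, either $|g(x)|\ge|g(y)|$ for all $y\prec x$, or $g(x)=\mathbb{O}$.
   Context: Let $(L^+,\le)$ be a totally ordered set with bottom $\mathbb{O}$ and top $\mathbb{1}$. Let $L^-=\{-a:a\in L^+\}$ be a disjoint copy with reversed order, $L=L^+\cup L^-$ with $-\mathbb{O}=\mathbb{O}$, totally ordered with $L^-$ below $L^+$; $-(-a)=a$; $|a|=a$ on $L^+$, $|a|=-a$ on $L^-$. Symmetric maximum: $a\oplus b=\mathbb{O}$ if $b=-a$, otherwise the one of $a,b$ with larger absolute value. For a finite family $(a_i)_{i\in I}$, the splitting rule gives $\langle\bigoplus_{i\in I}a_i\rangle^+_-:=\big(\bigvee_{a_i\ge\mathbb{O}}a_i\big)\oplus\big(\bigwedge_{a_i<\mathbb{O}}a_i\big)$ (empty sup/inf equal to $\mathbb{O}$); this equals $\bigoplus_{i}a_i$ (independent of parenthesization) when $|I|\le2$ or $\bigvee_ia_i\ne-\bigwedge_ia_i$, and $\mathbb{O}$ otherwise. Locally finite: every interval $[u,v]$ is finite. $y\prec x$ means $x$ covers $y$. *)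

theory Defs
  imports Main
begin

text \<open>Raw representation of L = L+ \<union> L-: Pos a stands for a \<in> L+, Neg a for -a \<in> L-.
  The element Neg bot is excluded (since -O = O).\<close>

datatype 'a sgnv = Pos 'a | Neg 'a

typedef (overloaded) ('a::"{linorder,order_bot,order_top}") symL = "{x::'a sgnv. x \<noteq> Neg bot}"
  by (rule exI[of _ "Pos bot"]) simp

fun sle :: "'a::linorder sgnv \<Rightarrow> 'a sgnv \<Rightarrow> bool" where
  "sle (Neg a) (Neg b) = (b \<le> a)"
| "sle (Neg a) (Pos b) = True"
| "sle (Pos a) (Neg b) = False"
| "sle (Pos a) (Pos b) = (a \<le> b)"

instantiation symL :: ("{linorder,order_bot,order_top}") linorder
begin
definition less_eq_symL :: "'a symL \<Rightarrow> 'a symL \<Rightarrow> bool" where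
  "less_eq_symL x y = sle (Rep_symL x) (Rep_symL y)"
definition less_symL :: "'a symL \<Rightarrow> 'a symL \<Rightarrow> bool" where
  "less_symL x y = (x \<le> y \<and> \<not> y \<le> x)"
instance
proof
  fix x y z :: "'a symL"
  show "(x < y) = (x \<le> y \<and> \<not> y \<le> x)" by (simp add: less_symL_def)
  show "x \<le> x" unfolding less_eq_symL_def by (cases "Rep_symL x") auto
  show "x \<le> y \<Longrightarrow> y \<le> z \<Longrightarrow> x \<le> z" unfolding less_eq_symL_def
    by (cases "Rep_symL x"; cases "Rep_symL y"; cases "Rep_symL z") auto
  show "x \<le> y \<Longrightarrow> y \<le> x \<Longrightarrow> x = y" unfolding less_eq_symL_def
    by (cases "Rep_symL x"; cases "Rep_symL y") (auto simp: Rep_symL_inject[symmetric])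
  show "x \<le> y \<or> y \<le> x" unfolding less_eq_symL_def
    by (cases "Rep_symL x"; cases "Rep_symL y") auto
qed
end

definition zeroL :: "'a::{linorder,order_bot,order_top} symL" where
  "zeroL = Abs_symL (Pos bot)"

definition negL :: "'a::{linorder,order_bot,order_top} symL \<Rightarrow> 'a symL" where
  "negL x = Abs_symL (case Rep_symL x of
      Pos a \<Rightarrow> (if a = bot then Pos bot else Neg a)
    | Neg a \<Rightarrow> Pos a)"

definition absL :: "'a::{linorder,order_bot,order_top} symL \<Rightarrow> 'a symL" where
  "absL x = (if zeroL \<le> x then x else negL x)"

definition smax :: "'a::{linorder,order_bot,order_top} symL \<Rightarrow> 'a symL \<Rightarrow> 'a symL" where
  "smax a b = (if b = negL a then zeroL else if absL b \<le> absL a then a else b)"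

definition split_sum :: "'i set \<Rightarrow> ('i \<Rightarrow> 'a::{linorder,order_bot,order_top} symL) \<Rightarrow> 'a symL" where
  "split_sum I a =
     smax (if {i\<in>I. zeroL \<le> a i} = {} then zeroL else Max (a ` {i\<in>I. zeroL \<le> a i}))
          (if {i\<in>I. a i < zeroL} = {} then zeroL else Min (a ` {i\<in>I. a i < zeroL}))"

text \<open>Covering relation: covered_by y x means y \<prec> x (x covers y).\<close>
definition covered_by :: "'x::order \<Rightarrow> 'x \<Rightarrow> bool" where
  "covered_by y x = (y < x \<and> \<not> (\<exists>z. y < z \<and> z < x))"

end

theory Submission imports Defs begin

text \<open>The splitting rule is the symmetric maximum of a positive part, the largest nonnegative
  term, and a negative part, the smallest negative term. Enlarging the index set can only raise
  the positive part and lower the negative part, so both absolute values grow; and unless the two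
  parts cancel, the absolute value of their symmetric maximum is the larger of the two. Since
  every down-set of a locally finite poset with least element is finite and down-sets grow along
  the order, \<open>|g|\<close> is monotone below any point where \<open>g\<close> does not vanish.\<close>

lemma Rep_zeroL: "Rep_symL (zeroL :: 'a::{linorder,order_bot,order_top} symL) = Pos bot"
  unfolding zeroL_def by (simp add: Abs_symL_inverse)

lemma Rep_negL_Neg: "Rep_symL x = Neg a \<Longrightarrow> Rep_symL (negL x) = Pos a"
  unfolding negL_def by (simp add: Abs_symL_inverse)

lemma Rep_negL_Pos_bot: "Rep_symL x = Pos bot \<Longrightarrow> Rep_symL (negL x) = Pos bot"
  unfolding negL_def by (simp add: Abs_symL_inverse)

lemma Rep_symL_not_Neg_bot: "Rep_symL x \<noteq> Neg bot"
  using Rep_symL by auto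

lemma absL_eq_self: "zeroL \<le> x \<Longrightarrow> absL x = x"
  by (simp add: absL_def)

lemma absL_zeroL: "absL zeroL = zeroL"
  by (simp add: absL_def)

lemma zeroL_le_absL: "zeroL \<le> absL (x :: 'a::{linorder,order_bot,order_top} symL)"
proof (cases "zeroL \<le> x")
  case False
  then obtain a where "Rep_symL x = Neg a"
    unfolding less_eq_symL_def Rep_zeroL by (cases "Rep_symL x") auto
  with False show ?thesis
    by (simp add: absL_def less_eq_symL_def Rep_zeroL Rep_negL_Neg)
qed (simp add: absL_def)

lemma absL_antimono_nonpos:
  fixes a b :: "'a::{linorder,order_bot,order_top} symL"
  assumes "b \<le> a" and "a \<le> zeroL"
  shows "absL a \<le> absL b"
  using assms Rep_symL_not_Neg_bot[of a] Rep_symL_not_Neg_bot[of b]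
  unfolding absL_def less_eq_symL_def Rep_zeroL
  by (cases "Rep_symL a"; cases "Rep_symL b")
     (auto simp: Rep_negL_Neg Rep_negL_Pos_bot Rep_zeroL bot_unique less_eq_symL_def)

lemma smax_negL: "smax a (negL a) = zeroL"
  by (simp add: smax_def)

lemma absL_smax_le_max:
  "absL (smax a b) \<le> max (absL a) (absL (b :: 'a::{linorder,order_bot,order_top} symL))"
  unfolding smax_def using zeroL_le_absL[of a] by (auto simp: absL_zeroL le_max_iff_disj)

lemma absL_smax_eq_max: "b \<noteq> negL a \<Longrightarrow> absL (smax a b) = max (absL a) (absL b)"
  unfolding smax_def by auto

definition pos_part :: "'i set \<Rightarrow> ('i \<Rightarrow> 'a::{linorder,order_bot,order_top} symL) \<Rightarrow> 'a symL"
  where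
  "pos_part I a = (if {i\<in>I. zeroL \<le> a i} = {} then zeroL else Max (a ` {i\<in>I. zeroL \<le> a i}))"

definition neg_part :: "'i set \<Rightarrow> ('i \<Rightarrow> 'a::{linorder,order_bot,order_top} symL) \<Rightarrow> 'a symL"
  where
  "neg_part I a = (if {i\<in>I. a i < zeroL} = {} then zeroL else Min (a ` {i\<in>I. a i < zeroL}))"

lemma split_sum_eq_smax_parts: "split_sum I a = smax (pos_part I a) (neg_part I a)"
  unfolding split_sum_def pos_part_def neg_part_def ..

lemma zeroL_le_pos_part:
  assumes "finite I"
  shows "zeroL \<le> pos_part I a"
proof (cases "{i\<in>I. zeroL \<le> a i} = {}")
  case False
  then obtain i where "i \<in> I" "zeroL \<le> a i" by auto
  moreover have "a i \<le> Max (a ` {i\<in>I. zeroL \<le> a i})"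
    using assms calculation by (intro Max_ge) auto
  ultimately show ?thesis using False unfolding pos_part_def by auto
qed (simp add: pos_part_def)

lemma neg_part_le_zeroL:
  assumes "finite I"
  shows "neg_part I a \<le> zeroL"
proof (cases "{i\<in>I. a i < zeroL} = {}")
  case False
  then obtain i where "i \<in> I" "a i < zeroL" by auto
  moreover have "Min (a ` {i\<in>I. a i < zeroL}) \<le> a i"
    using assms calculation by (intro Min_le) auto
  ultimately show ?thesis using False unfolding neg_part_def by auto
qed (simp add: neg_part_def)

lemma pos_part_mono:
  assumes "finite J" and "I \<subseteq> J"
  shows "pos_part I a \<le> pos_part J a"
proof (cases "{i\<in>I. zeroL \<le> a i} = {}")
  case True
  then have "pos_part I a = zeroL" by (simp add: pos_part_def)
  then show ?thesis using zeroL_le_pos_part[OF assms(1)] by simp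
next
  case False
  with assms show ?thesis unfolding pos_part_def by (auto intro!: Max_mono)
qed

lemma neg_part_antimono:
  assumes "finite J" and "I \<subseteq> J"
  shows "neg_part J a \<le> neg_part I a"
proof (cases "{i\<in>I. a i < zeroL} = {}")
  case True
  then have "neg_part I a = zeroL" by (simp add: neg_part_def)
  then show ?thesis using neg_part_le_zeroL[OF assms(1)] by simp
next
  case False
  with assms show ?thesis unfolding neg_part_def by (auto intro!: Min_antimono)
qed

lemma absL_split_sum_mono:
  assumes "finite J" and "I \<subseteq> J" and nonzero: "split_sum J a \<noteq> zeroL"
  shows "absL (split_sum I a) \<le> absL (split_sum J a)"
proof -
  have finite_I: "finite I" using assms(1,2) by (rule finite_subset[rotated])
  have no_cancel: "neg_part J a \<noteq> negL (pos_part J a)"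
    using nonzero smax_negL by (metis split_sum_eq_smax_parts)
  have "absL (split_sum I a) \<le> max (absL (pos_part I a)) (absL (neg_part I a))"
    unfolding split_sum_eq_smax_parts by (rule absL_smax_le_max)
  also have "\<dots> \<le> max (absL (pos_part J a)) (absL (neg_part J a))"
  proof -
    have "absL (pos_part I a) \<le> absL (pos_part J a)"
      using pos_part_mono[OF assms(1,2), where a=a]
        zeroL_le_pos_part[OF assms(1), where a=a]
        zeroL_le_pos_part[OF finite_I, where a=a] by (simp add: absL_eq_self)
    moreover have "absL (neg_part I a) \<le> absL (neg_part J a)"
      by (intro absL_antimono_nonpos neg_part_antimono neg_part_le_zeroL assms finite_I)
    ultimately show ?thesis by (rule max.mono)
  qed
  also have "\<dots> = absL (split_sum J a)"
    unfolding split_sum_eq_smax_parts by (rule absL_smax_eq_max[OF no_cancel, symmetric])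
  finally show ?thesis .
qed

theorem proposition5:
  fixes f g :: "'x::order \<Rightarrow> 'a::{linorder,order_bot,order_top} symL"
    and z :: 'x
  assumes locfin: "\<And>u v::'x. finite {u..v}"
    and least: "\<And>x. z \<le> x"
    and gdef: "\<And>x. g x = split_sum {y. y \<le> x} f"
  shows "\<forall>x. (\<forall>y. covered_by y x \<longrightarrow> absL (g y) \<le> absL (g x)) \<or> g x = zeroL"
proof (rule allI, rule disjCI)
  fix x
  assume "g x \<noteq> zeroL"
  have "{y. y \<le> x} = {z..x}" using least by auto
  then have "finite {y. y \<le> x}" using locfin by simp
  moreover have "{y'. y' \<le> y} \<subseteq> {y. y \<le> x}" if "y \<le> x" for y
    using that by auto
  ultimately have "absL (g y) \<le> absL (g x)" if "y \<le> x" for y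
    using that \<open>g x \<noteq> zeroL\<close> unfolding gdef by (blast intro: absL_split_sum_mono)
  then show "\<forall>y. covered_by y x \<longrightarrow> absL (g y) \<le> absL (g x)"
    unfolding covered_by_def by auto
qed

end
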